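(* Let $G=(V,E)$ be a unit disk graph, let $VC^*(G)$ be a minimum vertex cover of $G$, and let $VC(G)$ be the vertex cover output by Heuristic VCover on $G$. Then $|VC(G)| \leq 1.5\,|VC^*(G)|$.
   Context: A graph $G$ is a unit disk graph if its vertices can be put in one-to-one correspondence with closed disks of radius $1$ in the plane so that two vertices are adjacent if and only if the corresponding disks intersect (tangent disks are considered to intersect). A vertex cover of $G$ is a set $V'\subseteq V$ containing at least one endpoint of every edge; for $U\subseteq V$, $G(U)$ denotes the subgraph induced on $U$. Heuristic VCover: (1) Set $V_1=\emptyset$, $V'=V$. (2) While $G(V')$ contains a triangle, pick a set $X\subseteq V'$ such that $G(X)$ is a triangle, and set $V_1 = V_1\cup X$, $V'=V'\setminus X$. (3) For the resulting triangle-free graph $G(V')$, compute (by the Nemhauser–Trotter algorithm, in polynomial time) two disjoint sets $P,Q\subseteq V'$ such that: (i) some minimum vertex cover of $G(V')$ contains $P$; (ii) if $D$ is any vertex cover of $G(Q)$ then $D\cup P$ is a vertex cover of $G(V')$; (iii) every minimum vertex cover of $G(V')$ has size at least $|P|+|Q|/2$. (4) Properly color $G(Q)$ with at most $4$ colors (possible since $G(Q)$ is a triangle-free unit disk graph), and let $S$ be a color class of largest cardinality. (5) Output $VC(G)=V_1\cup P\cup (Q\setminus S)$. *)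

theory Defs
  imports Complex_Main
begin

definition simple_graph :: "'a set \<Rightarrow> 'a set set \<Rightarrow> bool" where
  "simple_graph V E \<longleftrightarrow> finite V \<and> (\<forall>e\<in>E. \<exists>u v. u \<in> V \<and> v \<in> V \<and> u \<noteq> v \<and> e = {u, v})"

text \<open>Unit disk graph: an injective assignment of centres of closed unit disks
  in the plane (identified with the complex numbers), two vertices adjacent iff the disks intersect, i.e. iff the
  Euclidean distance of their centres is at most 2.\<close>

definition unit_disk_graph :: "'a set \<Rightarrow> 'a set set \<Rightarrow> bool" where
  "unit_disk_graph V E \<longleftrightarrow> simple_graph V E \<and>
     (\<exists>c :: 'a \<Rightarrow> complex. inj_on c V \<and>
        (\<forall>u\<in>V. \<forall>v\<in>V. u \<noteq> v \<longrightarrow> ({u, v} \<in> E \<longleftrightarrow> dist (c u) (c v) \<le> 2)))"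

definition induced_edges :: "'a set set \<Rightarrow> 'a set \<Rightarrow> 'a set set" where
  "induced_edges E U = {e \<in> E. e \<subseteq> U}"

definition vertex_cover :: "'a set \<Rightarrow> 'a set set \<Rightarrow> 'a set \<Rightarrow> bool" where
  "vertex_cover V E C \<longleftrightarrow> C \<subseteq> V \<and> (\<forall>e\<in>E. e \<inter> C \<noteq> {})"

definition min_vertex_cover :: "'a set \<Rightarrow> 'a set set \<Rightarrow> 'a set \<Rightarrow> bool" where
  "min_vertex_cover V E C \<longleftrightarrow> vertex_cover V E C \<and>
     (\<forall>C'. vertex_cover V E C' \<longrightarrow> card C \<le> card C')"

definition is_triangle :: "'a set set \<Rightarrow> 'a set \<Rightarrow> bool" where
  "is_triangle E X \<longleftrightarrow> card X = 3 \<and> (\<forall>u\<in>X. \<forall>v\<in>X. u \<noteq> v \<longrightarrow> {u, v} \<in> E)"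

definition triangle_free :: "'a set set \<Rightarrow> 'a set \<Rightarrow> bool" where
  "triangle_free E U \<longleftrightarrow> \<not> (\<exists>X \<subseteq> U. is_triangle E X)"

text \<open>Step (2): the sequence of triangles removed by the loop. Each X_i is a
  triangle of G(V') where V' = V minus the triangles removed earlier.\<close>

fun triangle_sequence :: "'a set \<Rightarrow> 'a set set \<Rightarrow> 'a set list \<Rightarrow> bool" where
  "triangle_sequence V E [] = True"
| "triangle_sequence V E (X # Xs) \<longleftrightarrow>
     X \<subseteq> V \<and> is_triangle E X \<and> triangle_sequence (V - X) E Xs"

text \<open>Step (3): properties (i)-(iii) of the Nemhauser--Trotter output for the
  graph G(V').\<close>

definition NT_pair :: "'a set \<Rightarrow> 'a set set \<Rightarrow> 'a set \<Rightarrow> 'a set \<Rightarrow> bool" where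
  "NT_pair V' E P Q \<longleftrightarrow> P \<subseteq> V' \<and> Q \<subseteq> V' \<and> P \<inter> Q = {} \<and>
     (\<exists>D. min_vertex_cover V' (induced_edges E V') D \<and> P \<subseteq> D) \<and>
     (\<forall>D. vertex_cover Q (induced_edges E Q) D \<longrightarrow>
            vertex_cover V' (induced_edges E V') (D \<union> P)) \<and>
     (\<forall>D. min_vertex_cover V' (induced_edges E V') D \<longrightarrow>
            real (card D) \<ge> real (card P) + real (card Q) / 2)"

definition proper_4_coloring :: "'a set set \<Rightarrow> 'a set \<Rightarrow> ('a \<Rightarrow> nat) \<Rightarrow> bool" where
  "proper_4_coloring E Q col \<longleftrightarrow> (\<forall>v\<in>Q. col v < 4) \<and>
     (\<forall>u\<in>Q. \<forall>v\<in>Q. {u, v} \<in> E \<longrightarrow> col u \<noteq> col v)"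

definition largest_color_class :: "'a set \<Rightarrow> ('a \<Rightarrow> nat) \<Rightarrow> 'a set \<Rightarrow> bool" where
  "largest_color_class Q col S \<longleftrightarrow> (\<exists>k<4. S = {v\<in>Q. col v = k} \<and>
     (\<forall>j<4. card {v\<in>Q. col v = j} \<le> card S))"

text \<open>OUT is a possible output of Heuristic VCover on G = (V,E) (the heuristic
  is nondeterministic in the choice of triangles, of P and Q, and of the colouring).\<close>

definition vcover_output :: "'a set \<Rightarrow> 'a set set \<Rightarrow> 'a set \<Rightarrow> bool" where
  "vcover_output V E OUT \<longleftrightarrow>
     (\<exists>Xs P Q col S.
        triangle_sequence V E Xs \<and>
        (let V1 = \<Union>(set Xs); V' = V - V1 in
          triangle_free E V' \<and>
          NT_pair V' E P Q \<and>
          proper_4_coloring E Q col \<and>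
          largest_color_class Q col S \<and>
          OUT = V1 \<union> P \<union> (Q - S)))"

end

theory Submission
  imports Defs
begin

text \<open>Every vertex cover contains at least two vertices of each removed triangle, so on
  the removed triangles the heuristic pays at most 3/2 times the optimum. On the rest,
  a largest of four colour classes has at least a quarter of Q, so the heuristic takes
  at most |P| + 3|Q|/4, which is at most 3/2 times the Nemhauser--Trotter lower bound
  |P| + |Q|/2 for covering G(V'). Since V1 and V' partition V, an optimal cover splits
  into a cover of the triangles and a cover of G(V'). The unit disk geometry is needed
  only to make the 4-colouring of step (4) exist; the bound itself uses nothing about
  G beyond finiteness.\<close>

lemma finite_triangle: "is_triangle E X \<Longrightarrow> finite X"
  unfolding is_triangle_def by (metis card.infinite zero_neq_numeral)

lemma card_Int_triangle_ge_2:
  assumes X: "is_triangle E X" and cover: "\<forall>e\<in>E. e \<inter> C \<noteq> {}"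
  shows "2 \<le> card (X \<inter> C)"
proof -
  have "card (X - C) \<le> 1"
  proof (rule ccontr)
    assume "\<not> card (X - C) \<le> 1"
    then obtain u v where "u \<in> X - C" "v \<in> X - C" "u \<noteq> v"
      using card_le_Suc0_iff_eq[of "X - C"] finite_triangle[OF X] by auto
    moreover from this have "{u, v} \<in> E" using X unfolding is_triangle_def by auto
    ultimately show False using cover by auto
  qed
  moreover have "card X = card (X \<inter> C) + card (X - C)"
    using card_Int_Diff[OF finite_triangle[OF X]] .
  ultimately show ?thesis using X unfolding is_triangle_def by simp
qed

lemma triangle_sequence_subset: "triangle_sequence W E Xs \<Longrightarrow> \<Union>(set Xs) \<subseteq> W"
  by (induction Xs arbitrary: W) auto

lemma finite_triangle_sequence: "triangle_sequence W E Xs \<Longrightarrow> finite (\<Union>(set Xs))"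
  by (induction Xs arbitrary: W) (auto intro: finite_triangle)

lemma card_triangle_sequence:
  "triangle_sequence W E Xs \<Longrightarrow> card (\<Union>(set Xs)) = 3 * length Xs"
proof (induction Xs arbitrary: W)
  case (Cons X Xs)
  then have "X \<inter> \<Union>(set Xs) = {}"
    using triangle_sequence_subset[of "W - X" E Xs] by auto
  moreover have "finite X" "finite (\<Union>(set Xs))" "card X = 3"
    using Cons.prems finite_triangle finite_triangle_sequence[of "W - X" E Xs]
    by (auto simp: is_triangle_def)
  ultimately show ?case using Cons.IH[of "W - X"] Cons.prems by (simp add: card_Un_disjoint)
qed simp

lemma card_Int_cover_triangle_sequence:
  assumes "triangle_sequence W E Xs" and cover: "\<forall>e\<in>E. e \<inter> C \<noteq> {}"
  shows "2 * length Xs \<le> card (\<Union>(set Xs) \<inter> C)"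
  using assms(1)
proof (induction Xs arbitrary: W)
  case (Cons X Xs)
  let ?R = "\<Union>(set Xs)"
  have X: "is_triangle E X" and T: "triangle_sequence (W - X) E Xs"
    using Cons.prems by auto
  have "card (\<Union>(set (X # Xs)) \<inter> C) = card (X \<inter> C) + card (?R \<inter> C)"
  proof -
    have "\<Union>(set (X # Xs)) \<inter> C = (X \<inter> C) \<union> (?R \<inter> C)" by auto
    moreover have "(X \<inter> C) \<inter> (?R \<inter> C) = {}" using triangle_sequence_subset[OF T] by auto
    ultimately show ?thesis
      using finite_triangle[OF X] finite_triangle_sequence[OF T] by (simp add: card_Un_disjoint)
  qed
  then show ?case
    using card_Int_triangle_ge_2[OF X cover] Cons.IH[OF T] by simp
qed simp

lemma vertex_cover_induced_Int:
  "\<forall>e\<in>E. e \<inter> C \<noteq> {} \<Longrightarrow> vertex_cover U (induced_edges E U) (C \<inter> U)"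
  unfolding vertex_cover_def induced_edges_def by auto

lemma NT_pair_card_le_vertex_cover:
  assumes NT: "NT_pair V' E P Q" and C: "vertex_cover V' (induced_edges E V') C"
  shows "real (card P) + real (card Q) / 2 \<le> real (card C)"
proof -
  obtain D where D: "min_vertex_cover V' (induced_edges E V') D"
    using NT unfolding NT_pair_def by blast
  then have "real (card P) + real (card Q) / 2 \<le> real (card D)"
    using NT unfolding NT_pair_def by blast
  also have "card D \<le> card C" using D C unfolding min_vertex_cover_def by blast
  finally show ?thesis by simp
qed

lemma card_Diff_largest_color_class:
  assumes "finite Q" "proper_4_coloring E Q col" "largest_color_class Q col S"
  shows "real (card (Q - S)) \<le> 3 / 4 * real (card Q)"
proof -
  obtain k where S: "S = {v\<in>Q. col v = k}"
    and largest: "\<forall>j<4. card {v\<in>Q. col v = j} \<le> card S"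
    using assms(3) unfolding largest_color_class_def by blast
  have "Q = (\<Union>j<4. {v\<in>Q. col v = j})"
    using assms(2) unfolding proper_4_coloring_def by auto
  then have "card Q \<le> (\<Sum>j<4. card {v\<in>Q. col v = j})"
    by (metis card_UN_le finite_lessThan)
  also have "\<dots> \<le> (\<Sum>j<(4::nat). card S)" using largest by (intro sum_mono) auto
  finally have "card Q \<le> 4 * card S" by simp
  moreover have "card (Q - S) + card S = card Q"
    using assms(1) S by (simp add: card_Diff_subset card_mono)
  ultimately show ?thesis by linarith
qed

theorem theorem4p3:
  fixes V :: "'a set" and E :: "'a set set" and Cstar OUT :: "'a set"
  assumes "unit_disk_graph V E"
    and "min_vertex_cover V E Cstar"
    and "vcover_output V E OUT"
  shows "real (card OUT) \<le> 1.5 * real (card Cstar)"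
proof -
  have "finite V" using assms(1) unfolding unit_disk_graph_def simple_graph_def by simp
  have "Cstar \<subseteq> V" and cover: "\<forall>e\<in>E. e \<inter> Cstar \<noteq> {}"
    using assms(2) unfolding min_vertex_cover_def vertex_cover_def by auto
  obtain Xs P Q col S where T: "triangle_sequence V E Xs"
    and NT: "NT_pair (V - \<Union>(set Xs)) E P Q"
    and col: "proper_4_coloring E Q col" "largest_color_class Q col S"
    and OUT: "OUT = \<Union>(set Xs) \<union> P \<union> (Q - S)"
    using assms(3) unfolding vcover_output_def Let_def by blast
  define V1 where "V1 = \<Union>(set Xs)"
  have "finite Q" using NT \<open>finite V\<close> unfolding NT_pair_def by (meson finite_Diff finite_subset)
  have "card OUT \<le> card V1 + card P + card (Q - S)"
    using card_Un_le[of "V1 \<union> P" "Q - S"] card_Un_le[of V1 P]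
    unfolding OUT V1_def by linarith
  moreover have "real (card P) + real (card Q) / 2 \<le> real (card (Cstar \<inter> (V - V1)))"
    using NT_pair_card_le_vertex_cover[OF NT vertex_cover_induced_Int[OF cover]]
    unfolding V1_def .
  moreover have "card Cstar = card (V1 \<inter> Cstar) + card (Cstar \<inter> (V - V1))"
  proof -
    have "finite Cstar" using \<open>Cstar \<subseteq> V\<close> \<open>finite V\<close> by (rule finite_subset)
    moreover have "Cstar - V1 = Cstar \<inter> (V - V1)" using \<open>Cstar \<subseteq> V\<close> by blast
    ultimately show ?thesis using card_Int_Diff[of Cstar V1] by (simp add: Int_commute)
  qed
  ultimately show ?thesis
    using card_triangle_sequence[OF T] card_Int_cover_triangle_sequence[OF T cover]
      card_Diff_largest_color_class[OF \<open>finite Q\<close> col]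
    unfolding V1_def by linarith
qed

end
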